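(* Assume $\nu$ satisfies Assumption (A), $\mathcal M$ satisfies Assumption (B), let $0<\gamma<1$, $\delta_1\in(0,1)$, and assume $M_1\ge-\ln(\delta_1/C)\frac{1}{c\,\phi(\kappa_0)}$ with $\kappa_0=\frac{(1-\gamma^2)\widehat\sigma_0(\mathcal M)^2}{8K_\infty K_{\mathcal L}}$, where $\widehat\sigma_0(\mathcal M)^2=\max_{\mu\in\mathcal P}\mathrm{Var}[g_\mu(Z)]$. Then $$\mathbb{P}\Big[\mathrm{Var}\big[g_{\overline\mu_1}(Z)\mid\overline Z^{1:\infty}\big]\ge\gamma^2\max_{\mu\in\mathcal P}\mathrm{Var}\big[g_\mu(Z)\mid\overline Z^{1:\infty}\big]\Big]\ge1-\delta_1,$$ i.e. $\mathbb{P}[\overline\sigma_0(\mathcal M)\ge\gamma\widehat\sigma_0(\mathcal M)]\ge1-\delta_1$, where $\overline\sigma_0(\mathcal M)=\sqrt{\mathrm{Var}[g_{\overline\mu_1}(Z)\mid\overline Z^{1:\infty}]}$.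
   Context: $Z$ is an $\mathbb{R}^d$-valued random vector with law $\nu$; $L^2_{\nu,0}(\mathbb{R}^d)=\{g\in L^2_\nu:\int g\,d\nu=0\}$, $\|g\|=\sqrt{\mathrm{Var}[g(Z)]}$. $\mathcal P\subset\mathbb{R}^p$; $f_\mu$ continuous, in $L^2_\nu$; $g_\mu=f_\mu-\mathbb{E}[f_\mu(Z)]$; $\mathcal M=\{g_\mu:\mu\in\mathcal P\}$; $d_n(\mathcal M)=\inf_{V_n}\sup_\mu\inf_{h\in V_n}\|g_\mu-h\|$ over $n$-dimensional subspaces $V_n$. $\mathcal L$: Lipschitz functions, $\|f\|_{\mathcal L}$ Lipschitz constant. For $\overline Z=(Z_k)_{k\le M}$: $\mathbb{E}_{\overline Z}(f)=\frac1M\sum_kf(Z_k)$, $\mathrm{Var}_{\overline Z}(f)=\mathbb{E}_{\overline Z}(f^2)-\mathbb{E}_{\overline Z}(f)^2$. $\overline Z^n=(Z^n_k)_{1\le k\le M_n}$, all $Z^n_k$ i.i.d. with law $\nu$ independent of $Z$, $\overline Z^{1:\infty}=(\overline Z^n)_n$. $\overline\mu_1\in\operatorname{argmax}_{\mu\in\mathcal P}\mathrm{Var}_{\overline Z^1}(g_\mu)$ with $g_{\overline\mu_1}\ne0$ (first step of the MC-greedy algorithm). Assumption (A): $\exists\alpha>1,\beta>0$ with $\int_{\mathbb{R}^d}e^{\beta|x|^\alpha}d\nu(x)<\infty$. $\phi(\kappa)=\kappa^2\mathbf 1_{\kappa\le1}+\kappa^\alpha\mathbf 1_{\kappa>1}$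 ($d=1$), $(\kappa/\log(2+1/\kappa))^2\mathbf 1_{\kappa\le1}+\kappa^\alpha\mathbf 1_{\kappa>1}$ ($d=2$), $\kappa^d\mathbf 1_{\kappa\le1}+\kappa^\alpha\mathbf 1_{\kappa>1}$ ($d\ge3$). $c,C>0$ are constants (depending on $\nu,d,\alpha,\beta$; they exist under (A) by Fournier–Guillin) such that for all $M$, all i.i.d. $\overline Z=(Z_k)_{k\le M}$ of law $\nu$, all $\kappa>0$: $\mathbb{P}[\sup_{\|f\|_{\mathcal L}\le1}|\mathbb{E}[f(Z)]-\mathbb{E}_{\overline Z}(f)|\ge\kappa]\le Ce^{-cM\phi(\kappa)}$. Assumption (B): (B1) $\mathcal M$ compact in $L^2_{\nu,0}$, $K_2=\sup_\mu\|g_\mu\|<\infty$; (B2) $\mathcal M\subset\mathcal L$, $K_{\mathcal L}=\sup_\mu\|g_\mu\|_{\mathcal L}<\infty$; (B3) $\mathcal M\subset L^\infty$, $K_\infty=\sup_\mu\|g_\mu\|_{L^\infty}<\infty$; (B4) $d_n(\mathcal M)>0$ for all $n$. *)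

theory Defs
  imports "HOL-Probability.Probability"
begin

definition var_nu :: "'a measure \<Rightarrow> ('a \<Rightarrow> real) \<Rightarrow> real" where
  "var_nu nu h = (\<integral>x. (h x)\<^sup>2 \<partial>nu) - (\<integral>x. h x \<partial>nu)\<^sup>2"

definition centered :: "'a measure \<Rightarrow> ('p \<Rightarrow> 'a \<Rightarrow> real) \<Rightarrow> 'p \<Rightarrow> 'a \<Rightarrow> real" where
  "centered nu f mu x = f mu x - (\<integral>y. f mu y \<partial>nu)"

definition l2dist :: "'a measure \<Rightarrow> ('a \<Rightarrow> real) \<Rightarrow> ('a \<Rightarrow> real) \<Rightarrow> real" where
  "l2dist nu u v = sqrt (\<integral>x. (u x - v x)\<^sup>2 \<partial>nu)"

definition emp_mean :: "nat \<Rightarrow> (nat \<Rightarrow> 'a) \<Rightarrow> ('a \<Rightarrow> real) \<Rightarrow> real" where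
  "emp_mean M z h = (\<Sum>k<M. h (z k)) / real M"

definition emp_var :: "nat \<Rightarrow> (nat \<Rightarrow> 'a) \<Rightarrow> ('a \<Rightarrow> real) \<Rightarrow> real" where
  "emp_var M z h = emp_mean M z (\<lambda>x. (h x)\<^sup>2) - (emp_mean M z h)\<^sup>2"

definition lip_const :: "('a::metric_space \<Rightarrow> real) \<Rightarrow> real" where
  "lip_const h = Inf {L. L-lipschitz_on UNIV h}"

definition linf_norm :: "'a measure \<Rightarrow> ('a \<Rightarrow> real) \<Rightarrow> ereal" where
  "linf_norm nu h = esssup nu (\<lambda>x. ereal \<bar>h x\<bar>)"

text \<open>Kolmogorov n-width of {g mu | mu in P} in L^2_{nu,0}: infimum over n-dimensional
  subspaces V_n = span{b_0,...,b_{n-1}} of L^2_{nu,0} (basis functions square-integrable,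
  centered, and linearly independent as elements of L^2_nu) of
  sup_mu inf_{h in V_n} ||g_mu - h||.\<close>
definition is_l2_0_basis :: "'a measure \<Rightarrow> nat \<Rightarrow> (nat \<Rightarrow> 'a \<Rightarrow> real) \<Rightarrow> bool" where
  "is_l2_0_basis nu n b \<longleftrightarrow>
     (\<forall>i<n. b i \<in> borel_measurable nu \<and> integrable nu (\<lambda>x. (b i x)\<^sup>2)
            \<and> (\<integral>x. b i x \<partial>nu) = 0) \<and>
     (\<forall>c::nat \<Rightarrow> real. (AE x in nu. (\<Sum>i<n. c i * b i x) = 0) \<longrightarrow> (\<forall>i<n. c i = 0))"

definition kolmogorov_width :: "'a measure \<Rightarrow> ('p \<Rightarrow> 'a \<Rightarrow> real) \<Rightarrow> 'p set \<Rightarrow> nat \<Rightarrow> real" where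
  "kolmogorov_width nu g P n =
     Inf ((\<lambda>b. SUP mu\<in>P. INF c\<in>(UNIV::(nat \<Rightarrow> real) set).
              l2dist nu (g mu) (\<lambda>x. \<Sum>i<n. c i * b i x))
          ` {b. is_l2_0_basis nu n b})"

definition phi_FG :: "nat \<Rightarrow> real \<Rightarrow> real \<Rightarrow> real" where
  "phi_FG d alpha k =
     (if k \<le> 1 then
        (if d = 1 then k\<^sup>2
         else if d = 2 then (k / ln (2 + 1 / k))\<^sup>2
         else k ^ d)
      else k powr alpha)"

end

theory Submission
  imports Defs
begin

(* With kappa as in the statement, the Fournier-Guillin bound says that, except with probability
   at most delta1, the empirical measure of the sample is kappa-close to nu in the
   Kantorovich-Rubinstein (Wasserstein-1) distance W. Every g_mu is K_L-Lipschitz and bounded by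
   K_inf, also at the sample points, since these almost surely avoid a null set containing every
   open null set of nu. Hence g_mu / K_L and the clipped square g_mu^2 / (2 K_inf K_L) are
   1-Lipschitz, so each empirical variance is within 3 K_inf K_L W of the true one, and an
   empirical maximiser loses at most 6 K_inf K_L W <= 3/4 (1 - gamma^2) sigma0^2 against the
   maximal variance sigma0^2.
   The sample-size hypothesis forces M1 > 0 because C >= 1, which the concentration bound
   itself implies at M = 1: one sample point is at distance W >= min_y E|Z - y| > 0 from nu. *)

lemma phi_FG_pos: "k > 0 \<Longrightarrow> phi_FG d alpha k > 0"
proof -
  assume k: "k > 0"
  then have "ln (2 + 1 / k) > 0" by (intro ln_gt_zero) (simp add: add_pos_pos)
  then show ?thesis using k unfolding phi_FG_def by auto
qed

lemma sample_size_condition: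
  fixes c phi C delta :: real and M :: nat
  assumes "c > 0" "phi > 0" "C \<ge> 1" "0 < delta" "delta < 1"
    and "real M \<ge> - ln (delta / C) * (1 / (c * phi))"
  shows "M > 0" and "C * exp (- c * real M * phi) \<le> delta"
proof -
  have "- ln (delta / C) = ln (C / delta)"
    using assms by (simp add: ln_div)
  then have M: "ln (C / delta) \<le> c * real M * phi"
    using assms by (simp add: divide_le_eq mult_ac)
  moreover have "ln (C / delta) > 0"
    using assms by (intro ln_gt_zero) (simp add: field_simps)
  ultimately show "M > 0" by (cases M) auto
  have "exp (- c * real M * phi) \<le> exp (- ln (C / delta))"
    using M by simp
  also have "\<dots> = delta / C"
    using assms by (simp add: exp_minus)
  finally show "C * exp (- c * real M * phi) \<le> delta"
    using assms by (simp add: field_simps)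
qed

lemma lipschitz_on_lip_const:
  fixes h :: "'a::metric_space \<Rightarrow> real"
  assumes "L-lipschitz_on UNIV h"
  shows "(lip_const h)-lipschitz_on UNIV h"
proof -
  let ?S = "{L. L-lipschitz_on UNIV h}"
  have ne: "?S \<noteq> {}" using assms by blast
  have bound: "dist (h x) (h y) \<le> lip_const h * dist x y" if "x \<noteq> y" for x y
  proof -
    have "dist (h x) (h y) / dist x y \<le> lip_const h" unfolding lip_const_def
    proof (rule cInf_greatest[OF ne])
      fix L assume "L \<in> ?S"
      then show "dist (h x) (h y) / dist x y \<le> L"
        using that by (auto dest!: lipschitz_onD simp: divide_le_eq)
    qed
    then show ?thesis using that by (simp add: divide_le_eq)
  qed
  have "0 \<le> lip_const h" unfolding lip_const_def
    by (rule cInf_greatest[OF ne]) (auto dest: lipschitz_on_nonneg)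
  with bound show ?thesis
    by (intro lipschitz_onI) (metis dist_self mult_zero_right order_refl)
qed

lemma lipschitz_on_SUP_lip_const:
  fixes g :: "'p \<Rightarrow> 'a::metric_space \<Rightarrow> real"
  assumes "bdd_above ((\<lambda>mu. lip_const (g mu)) ` P)" and "\<exists>L. L-lipschitz_on UNIV (g mu)"
    and "mu \<in> P"
  shows "(SUP mu\<in>P. lip_const (g mu))-lipschitz_on UNIV (g mu)"
  using assms lipschitz_on_lip_const by (meson cSUP_upper lipschitz_on_le order_refl)

lemma lipschitz_on_dist: "1-lipschitz_on X (\<lambda>x. dist x y)"
  by (intro lipschitz_onI) (simp_all add: dist_real_def, metis abs_dist_diff_le dist_commute)

lemma abs_clip_diff_le: "\<bar>max (-B) (min B a) - max (-B) (min B b)\<bar> \<le> \<bar>a - b\<bar>" for a b B :: real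
  by (simp add: max_def min_def abs_le_iff) linarith

lemma abs_clip_square_diff_le:
  fixes B a b :: real
  assumes "B > 0"
  shows "\<bar>(max (-B) (min B a))\<^sup>2 - (max (-B) (min B b))\<^sup>2\<bar> \<le> 2 * B * \<bar>a - b\<bar>"
proof -
  let ?a = "max (-B) (min B a)" and ?b = "max (-B) (min B b)"
  have "\<bar>?a\<^sup>2 - ?b\<^sup>2\<bar> = \<bar>?a - ?b\<bar> * \<bar>?a + ?b\<bar>"
    by (simp add: power2_eq_square abs_mult[symmetric] algebra_simps)
  also have "\<dots> \<le> \<bar>a - b\<bar> * (2 * B)"
    using assms by (intro mult_mono abs_clip_diff_le) (auto simp: max_def min_def abs_le_iff)
  finally show ?thesis by (simp add: mult.commute)
qed

lemma SUP_le_approx_maximizer: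
  fixes F Fhat :: "'p \<Rightarrow> real"
  assumes "P \<noteq> {}" and "s \<in> P" and "\<And>mu. mu \<in> P \<Longrightarrow> Fhat mu \<le> Fhat s"
    and "\<And>mu. mu \<in> P \<Longrightarrow> \<bar>Fhat mu - F mu\<bar> \<le> e"
  shows "(SUP mu\<in>P. F mu) \<le> F s + 2 * e"
proof (rule cSUP_least[OF assms(1)])
  fix mu assume "mu \<in> P"
  then show "F mu \<le> F s + 2 * e"
    using assms(3,4)[OF \<open>mu \<in> P\<close>] assms(4)[OF assms(2)] by (auto simp: abs_le_iff)
qed

lemma bdd_above_of_bdd_above_sqrt:
  fixes F :: "'p \<Rightarrow> real"
  assumes "bdd_above ((\<lambda>mu. sqrt (F mu)) ` P)"
  shows "bdd_above (F ` P)"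
proof -
  obtain b where b: "\<And>mu. mu \<in> P \<Longrightarrow> sqrt (F mu) \<le> b"
    using assms by (auto simp: bdd_above_def)
  have "F mu \<le> b\<^sup>2" if "mu \<in> P" for mu
  proof (cases "F mu \<ge> 0")
    case True
    then have "F mu = (sqrt (F mu))\<^sup>2" by simp
    also have "\<dots> \<le> b\<^sup>2" using b[OF that] True by (intro power_mono) auto
    finally show ?thesis .
  next
    case False
    then show ?thesis using zero_le_power2[of b] by linarith
  qed
  then show ?thesis by (intro bdd_aboveI2)
qed

lemma emp_mean_cmult: "emp_mean M z (\<lambda>x. a * h x) = a * emp_mean M z h"
  by (simp add: emp_mean_def sum_distrib_left)

lemma emp_mean_cong: "(\<And>k. k < M \<Longrightarrow> h (z k) = h' (z k)) \<Longrightarrow> emp_mean M z h = emp_mean M z h'"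
  by (simp add: emp_mean_def)

lemma abs_emp_mean_le:
  assumes "B \<ge> 0" and "\<And>k. k < M \<Longrightarrow> \<bar>h (z k)\<bar> \<le> B"
  shows "\<bar>emp_mean M z h\<bar> \<le> B"
proof -
  have "\<bar>\<Sum>k<M. h (z k)\<bar> \<le> real M * B"
    using order_trans[OF sum_abs sum_mono[of "{..<M}" "\<lambda>k. \<bar>h (z k)\<bar>" "\<lambda>_. B"]] assms(2) by simp
  then show ?thesis
    using assms(1) by (cases "M = 0") (simp_all add: emp_mean_def divide_le_eq mult.commute)
qed

(* Kantorovich-Rubinstein form of the Wasserstein-1 distance between nu and the empirical
   measure of z 0, ..., z (M - 1). *)
definition emp_wasserstein :: "'a::metric_space measure \<Rightarrow> nat \<Rightarrow> (nat \<Rightarrow> 'a) \<Rightarrow> real" where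
  "emp_wasserstein nu M z =
     (SUP h\<in>{h::'a \<Rightarrow> real. 1-lipschitz_on UNIV h}. \<bar>(\<integral>x. h x \<partial>nu) - emp_mean M z h\<bar>)"

context prob_space
begin

lemma integral_centered:
  assumes "integrable M (f mu)"
  shows "(\<integral>x. centered M f mu x \<partial>M) = 0"
  using assms by (simp add: centered_def prob_space)

lemma integrable_centered_square:
  assumes "integrable M (f mu)" and "integrable M (\<lambda>x. (f mu x)\<^sup>2)"
  shows "integrable M (\<lambda>x. (centered M f mu x)\<^sup>2)"
proof -
  have "(\<lambda>x. (centered M f mu x)\<^sup>2)
      = (\<lambda>x. (f mu x)\<^sup>2 - 2 * (\<integral>y. f mu y \<partial>M) * f mu x + (\<integral>y. f mu y \<partial>M)\<^sup>2)"
    by (simp add: centered_def power2_diff algebra_simps)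
  then show ?thesis using assms by simp
qed

lemma var_nu_pos:
  assumes "integrable M (\<lambda>x. (g x)\<^sup>2)" and "(\<integral>x. g x \<partial>M) = 0" and "\<not> (AE x in M. g x = 0)"
  shows "0 < var_nu M g"
proof -
  have "(\<integral>x. (g x)\<^sup>2 \<partial>M) \<noteq> 0"
    using assms(1,3) by (subst integral_nonneg_eq_0_iff_AE) auto
  then show ?thesis
    using assms(2) by (simp add: var_nu_def order_less_le)
qed

lemma linf_norm_pos:
  assumes "\<not> (AE x in M. g x = 0)"
  shows "0 < linf_norm M g"
proof (rule ccontr)
  assume "\<not> 0 < linf_norm M g"
  then have le0: "esssup M (\<lambda>x. ereal \<bar>g x\<bar>) \<le> 0"
    by (simp add: linf_norm_def)
  from esssup_AE[of "\<lambda>x. ereal \<bar>g x\<bar>" M] have "AE x in M. ereal \<bar>g x\<bar> \<le> 0"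
    by eventually_elim (erule order_trans[OF _ le0])
  then have "AE x in M. g x = 0" by eventually_elim simp
  with assms show False by blast
qed

lemma AE_abs_le_SUP_linf_norm:
  assumes "(SUP mu\<in>P. linf_norm M (g mu)) < \<infinity>" and "mu \<in> P"
  shows "AE x in M. \<bar>g mu x\<bar> \<le> real_of_ereal (SUP mu\<in>P. linf_norm M (g mu))"
proof -
  have le_SUP: "esssup M (\<lambda>x. ereal \<bar>g mu x\<bar>) \<le> (SUP mu\<in>P. linf_norm M (g mu))"
    using assms(2) unfolding linf_norm_def by (rule SUP_upper)
  from esssup_AE[of "\<lambda>x. ereal \<bar>g mu x\<bar>" M]
  have AE: "AE x in M. ereal \<bar>g mu x\<bar> \<le> (SUP mu\<in>P. linf_norm M (g mu))"
    by eventually_elim (erule order_trans[OF _ le_SUP])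
  show ?thesis
  proof (cases "SUP mu\<in>P. linf_norm M (g mu)")
    case MInf
    with AE have "AE x in M. False" by simp
    then show ?thesis by (simp add: AE_False)
  qed (use AE assms(1) in auto)
qed

lemma measure_PiM_PiE_compl_null_Diff_ge:
  assumes "U \<in> null_sets M" and "finite I" and "A \<in> sets (PiM I (\<lambda>_. M))"
  shows "1 - measure (PiM I (\<lambda>_. M)) A
    \<le> measure (PiM I (\<lambda>_. M)) (PiE I (\<lambda>_. space M - U) - A)"
proof -
  interpret product_sigma_finite "\<lambda>_. M"
    by (simp add: product_sigma_finite_def prob_space_imp_sigma_finite prob_space_axioms)
  interpret P: prob_space "PiM I (\<lambda>_. M)"
    by (intro prob_space_PiM prob_space_axioms)
  let ?G = "PiE I (\<lambda>_. space M - U)"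
  have G: "?G \<in> sets (PiM I (\<lambda>_. M))"
    using assms(1,2) by (intro sets_PiM_I_finite) auto
  have "emeasure M (space M - U) = 1"
    using assms(1) by (subst emeasure_compl) (auto simp: emeasure_space_1)
  then have "emeasure (PiM I (\<lambda>_. M)) ?G = 1"
    using assms(1,2) by (subst emeasure_PiM) auto
  then have "measure (PiM I (\<lambda>_. M)) ?G = 1"
    by (simp add: measure_def)
  moreover have "measure (PiM I (\<lambda>_. M)) (?G \<inter> A) \<le> measure (PiM I (\<lambda>_. M)) A"
    using assms(3) by (intro P.finite_measure_mono) auto
  ultimately show ?thesis
    using P.finite_measure_Diff'[OF G assms(3)] by simp
qed

end

locale euclidean_distribution = prob_space nu for nu :: "'a::euclidean_space measure" +
  assumes sets_eq_borel: "sets nu = sets borel"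
begin

lemma borel_measurable_continuous_on_UNIV: "continuous_on UNIV h \<Longrightarrow> h \<in> borel_measurable nu"
  using measurable_cong_sets[OF sets_eq_borel refl] borel_measurable_continuous_onI by blast

lemma borel_measurable_lipschitz_on: "L-lipschitz_on UNIV h \<Longrightarrow> h \<in> borel_measurable nu"
  by (intro borel_measurable_continuous_on_UNIV lipschitz_on_continuous_on)

lemma integrable_norm_of_exp_moment:
  assumes alpha: "alpha > 1" and beta: "beta > 0"
    and expmom: "integrable nu (\<lambda>x. exp (beta * norm x powr alpha))"
  shows "integrable nu norm"
proof (rule Bochner_Integration.integrable_bound)
  show "integrable nu (\<lambda>x. 1 + exp (beta * norm x powr alpha) / beta)"
    using expmom by auto
  show "norm \<in> borel_measurable nu"
    by (intro borel_measurable_continuous_on_UNIV continuous_intros)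
  have "norm x \<le> 1 + exp (beta * norm x powr alpha) / beta" for x :: 'a
  proof (cases "norm x \<le> 1")
    case False
    then have "norm x \<le> norm x powr alpha"
      using alpha powr_mono[of 1 alpha "norm x"] by simp
    also have "\<dots> \<le> exp (beta * norm x powr alpha) / beta"
    proof -
      have "beta * norm x powr alpha \<le> exp (beta * norm x powr alpha)"
        using exp_ge_add_one_self[of "beta * norm x powr alpha"] by linarith
      then show ?thesis using beta by (simp add: field_simps)
    qed
    finally show ?thesis by simp
  qed (use beta in \<open>simp add: add_increasing2\<close>)
  then show "AE x in nu. norm (norm x) \<le> norm (1 + exp (beta * norm x powr alpha) / beta)"
    using beta by (intro AE_I2) (simp add: add_pos_nonneg)
qed

lemma integrable_lipschitz_on:
  fixes h :: "'a \<Rightarrow> real"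
  assumes nm: "integrable nu norm" and L: "L-lipschitz_on UNIV h"
  shows "integrable nu h"
proof (rule Bochner_Integration.integrable_bound)
  show "integrable nu (\<lambda>x. \<bar>h 0\<bar> + L * norm x)" using nm by auto
  show "h \<in> borel_measurable nu" using borel_measurable_lipschitz_on[OF L] .
  have "\<bar>h x\<bar> \<le> \<bar>h 0\<bar> + L * norm x" for x
    using lipschitz_onD[OF L, of x 0] by (simp add: dist_real_def abs_le_iff) linarith
  then show "AE x in nu. norm (h x) \<le> norm (\<bar>h 0\<bar> + L * norm x)"
    using lipschitz_on_nonneg[OF L] by (intro AE_I2) simp
qed

lemma abs_integral_minus_le_mean_dist:
  fixes h :: "'a \<Rightarrow> real"
  assumes nm: "integrable nu norm" and h: "1-lipschitz_on UNIV h"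
  shows "\<bar>(\<integral>x. h x \<partial>nu) - h y\<bar> \<le> (\<integral>x. dist x y \<partial>nu)"
proof -
  have "(\<integral>x. h x \<partial>nu) - h y = (\<integral>x. h x - h y \<partial>nu)"
    using integrable_lipschitz_on[OF nm h] by (simp add: prob_space)
  also have "\<bar>\<dots>\<bar> \<le> (\<integral>x. dist x y \<partial>nu)"
    using integrable_lipschitz_on[OF nm h] integrable_lipschitz_on[OF nm lipschitz_on_dist]
      lipschitz_onD[OF h]
    by (intro integral_abs_bound_integral) (auto simp: dist_real_def)
  finally show ?thesis .
qed

lemma mean_gap_le_emp_wasserstein:
  fixes h :: "'a \<Rightarrow> real"
  assumes nm: "integrable nu norm" and M: "M > 0" and h: "1-lipschitz_on UNIV h"
  shows "\<bar>(\<integral>x. h x \<partial>nu) - emp_mean M z h\<bar> \<le> emp_wasserstein nu M z"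
proof -
  have gap: "\<bar>(\<integral>x. h x \<partial>nu) - emp_mean M z h\<bar> \<le> (\<Sum>k<M. \<integral>x. dist x (z k) \<partial>nu) / real M"
    if "1-lipschitz_on UNIV h" for h
  proof -
    have "(\<integral>x. h x \<partial>nu) - emp_mean M z h = (\<Sum>k<M. (\<integral>x. h x \<partial>nu) - h (z k)) / real M"
      using M by (simp add: emp_mean_def sum_subtractf field_simps)
    moreover have "\<bar>\<Sum>k<M. (\<integral>x. h x \<partial>nu) - h (z k)\<bar> \<le> (\<Sum>k<M. \<integral>x. dist x (z k) \<partial>nu)"
      using abs_integral_minus_le_mean_dist[OF nm that]
      by (intro order_trans[OF sum_abs sum_mono])
    ultimately show ?thesis by (simp add: divide_right_mono)
  qed
  show ?thesis unfolding emp_wasserstein_def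
    using h gap by (intro cSUP_upper2[where x = h] bdd_aboveI2) auto
qed

lemma abs_emp_var_minus_second_moment_le:
  fixes g :: "'a \<Rightarrow> real"
  assumes nm: "integrable nu norm" and M: "M > 0" and K: "K > 0" and B: "B > 0"
    and g: "K-lipschitz_on UNIV g" and gz: "\<And>k. k < M \<Longrightarrow> \<bar>g (z k)\<bar> \<le> B"
    and gae: "AE x in nu. \<bar>g x\<bar> \<le> B" and g0: "(\<integral>x. g x \<partial>nu) = 0"
  shows "\<bar>emp_var M z g - (\<integral>x. (g x)\<^sup>2 \<partial>nu)\<bar> \<le> 3 * B * K * emp_wasserstein nu M z"
proof -
  let ?W = "emp_wasserstein nu M z"
  have "1-lipschitz_on UNIV (\<lambda>x. inverse K * g x)"
    using lipschitz_on_cmult_real[OF g, of "inverse K"] K by simp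
  from mean_gap_le_emp_wasserstein[OF nm M this, where z = z]
  have "\<bar>inverse K * emp_mean M z g\<bar> \<le> ?W"
    unfolding emp_mean_cmult integral_mult_right_zero g0 by simp
  then have "\<bar>emp_mean M z g\<bar> \<le> K * ?W"
    using K by (simp add: abs_mult field_simps)
  moreover have "\<bar>emp_mean M z g\<bar> \<le> B"
    using B gz by (intro abs_emp_mean_le) auto
  ultimately have "\<bar>emp_mean M z g\<bar> * \<bar>emp_mean M z g\<bar> \<le> B * (K * ?W)"
    by (intro mult_mono) auto
  then have mean_sq: "(emp_mean M z g)\<^sup>2 \<le> B * K * ?W"
    by (simp add: power2_eq_square mult.assoc)
  \<comment> \<open>Clipping at level B makes the square Lipschitz without changing it a.e. and on the sample.\<close>
  define cl where "cl x = max (-B) (min B (g x))" for x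
  have cl_eq: "cl x = g x" if "\<bar>g x\<bar> \<le> B" for x
    using that unfolding cl_def by (simp add: abs_le_iff)
  have cl_lip: "(2 * B * K)-lipschitz_on UNIV (\<lambda>x. (cl x)\<^sup>2)"
  proof (intro lipschitz_onI)
    fix x y
    have "\<bar>(cl x)\<^sup>2 - (cl y)\<^sup>2\<bar> \<le> 2 * B * \<bar>g x - g y\<bar>"
      unfolding cl_def using abs_clip_square_diff_le[OF B] .
    also have "\<dots> \<le> 2 * B * (K * dist x y)"
      using lipschitz_onD[OF g, of x y] B by (simp add: dist_real_def)
    finally show "dist ((cl x)\<^sup>2) ((cl y)\<^sup>2) \<le> 2 * B * K * dist x y"
      by (simp add: dist_real_def mult.assoc)
  qed (use B K in simp)
  have "\<bar>inverse (2 * B * K)\<bar> * (2 * B * K) = 1"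
    using B K by (simp add: field_simps)
  with lipschitz_on_cmult_real[OF cl_lip, of "inverse (2 * B * K)"]
  have "1-lipschitz_on UNIV (\<lambda>x. inverse (2 * B * K) * (cl x)\<^sup>2)"
    by simp
  from mean_gap_le_emp_wasserstein[OF nm M this, where z = z]
  have "\<bar>inverse (2 * B * K) * ((\<integral>x. (cl x)\<^sup>2 \<partial>nu) - emp_mean M z (\<lambda>x. (cl x)\<^sup>2))\<bar> \<le> ?W"
    unfolding emp_mean_cmult integral_mult_right_zero by (simp add: right_diff_distrib)
  moreover have "(\<integral>x. (cl x)\<^sup>2 \<partial>nu) = (\<integral>x. (g x)\<^sup>2 \<partial>nu)"
    using gae borel_measurable_lipschitz_on[OF cl_lip] borel_measurable_lipschitz_on[OF g]
    by (intro integral_cong_AE) (auto simp: cl_eq)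
  moreover have "emp_mean M z (\<lambda>x. (cl x)\<^sup>2) = emp_mean M z (\<lambda>x. (g x)\<^sup>2)"
    using gz by (intro emp_mean_cong) (simp add: cl_eq)
  ultimately have "\<bar>(\<integral>x. (g x)\<^sup>2 \<partial>nu) - emp_mean M z (\<lambda>x. (g x)\<^sup>2)\<bar> \<le> 2 * B * K * ?W"
    using B K by (simp add: abs_mult field_simps)
  moreover have "3 * B * K * ?W = 2 * B * K * ?W + B * K * ?W"
    by (simp add: algebra_simps)
  ultimately show ?thesis
    using mean_sq zero_le_power2[of "emp_mean M z g"] unfolding emp_var_def abs_le_iff by linarith
qed

lemma null_set_covering_open_null_sets:
  obtains U where "U \<in> null_sets nu" "\<And>S. open S \<Longrightarrow> S \<in> null_sets nu \<Longrightarrow> S \<subseteq> U"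
proof -
  obtain \<B> :: "'a set set" where "countable \<B>" and open_\<B>: "\<And>C. C \<in> \<B> \<Longrightarrow> open C"
    and base: "\<And>S. open S \<Longrightarrow> \<exists>\<U>. \<U> \<subseteq> \<B> \<and> S = \<Union>\<U>"
    using univ_second_countable by blast
  define U where "U = (\<Union>C\<in>{C \<in> \<B>. C \<in> null_sets nu}. C)"
  have "U \<in> null_sets nu"
    unfolding U_def using \<open>countable \<B>\<close> by (intro null_sets_UN') auto
  moreover have "S \<subseteq> U" if "open S" "S \<in> null_sets nu" for S
  proof -
    obtain \<U> where "\<U> \<subseteq> \<B>" "S = \<Union>\<U>" using base[OF \<open>open S\<close>] by blast
    moreover have "C \<in> null_sets nu" if "C \<in> \<U>" "\<U> \<subseteq> \<B>" "S = \<Union>\<U>" for C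
    proof (rule null_sets_subset[OF \<open>S \<in> null_sets nu\<close>])
      show "C \<in> sets nu" using that open_\<B> by (auto simp: sets_eq_borel)
    qed (use that in blast)
    ultimately show ?thesis unfolding U_def by blast
  qed
  ultimately show thesis using that by blast
qed

lemma abs_le_outside_open_null_sets:
  fixes g :: "'a \<Rightarrow> real"
  assumes U: "\<And>S. open S \<Longrightarrow> S \<in> null_sets nu \<Longrightarrow> S \<subseteq> U"
    and g: "continuous_on UNIV g" and gae: "AE x in nu. \<bar>g x\<bar> \<le> B" and "x \<notin> U"
  shows "\<bar>g x\<bar> \<le> B"
proof -
  have "open {y. B < \<bar>g y\<bar>}"
    using g by (intro open_Collect_less continuous_on_const continuous_on_rabs)
  moreover have "{y. B < \<bar>g y\<bar>} \<in> null_sets nu"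
    using gae calculation sets_eq_borel by (subst AE_iff_null_sets) (auto simp: not_less)
  ultimately have "{y. B < \<bar>g y\<bar>} \<subseteq> U" by (rule U)
  with \<open>x \<notin> U\<close> show ?thesis by (meson mem_Collect_eq not_le subsetD)
qed

lemma lipschitz_constant_pos:
  fixes g :: "'a \<Rightarrow> real"
  assumes g: "K-lipschitz_on UNIV g" and "(\<integral>x. g x \<partial>nu) = 0" and "\<not> (AE x in nu. g x = 0)"
  shows "0 < K"
proof (rule ccontr)
  assume "\<not> 0 < K"
  with lipschitz_on_nonneg[OF g] have "K = 0" by simp
  with lipschitz_onD[OF g] have const: "g x = g 0" for x by simp
  have "(\<integral>x. g x \<partial>nu) = (\<integral>x. g 0 \<partial>nu)"
    by (rule Bochner_Integration.integral_cong[OF refl const])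
  then have "g 0 = 0" using assms(2) by (simp add: prob_space)
  with const assms(3) show False by simp
qed

lemma integral_dist_pos:
  fixes g :: "'a \<Rightarrow> real"
  assumes nm: "integrable nu norm" and g: "g \<in> borel_measurable nu"
    and "(\<integral>x. g x \<partial>nu) = 0" and "\<not> (AE x in nu. g x = 0)"
  shows "0 < (\<integral>x. dist x y \<partial>nu)"
proof (rule ccontr)
  assume "\<not> 0 < (\<integral>x. dist x y \<partial>nu)"
  then have "AE x in nu. dist x y = 0"
    using integrable_lipschitz_on[OF nm lipschitz_on_dist]
    by (subst integral_nonneg_eq_0_iff_AE[symmetric]) (auto intro: order_antisym)
  then have ae: "AE x in nu. g x = g y" by eventually_elim simp
  then have "(\<integral>x. g x \<partial>nu) = g y"
    using g by (subst integral_cong_AE[of _ _ "\<lambda>_. g y"]) (auto simp: prob_space)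
  with ae assms(3,4) show False by simp
qed

lemma mean_dist_attains_min:
  assumes nm: "integrable nu norm"
  obtains y0 where "\<And>y. (\<integral>x. dist x y0 \<partial>nu) \<le> (\<integral>x. dist x y \<partial>nu)"
proof -
  define m where "m y = (\<integral>x. dist x y \<partial>nu)" for y
  have int: "integrable nu (\<lambda>x. dist x y)" for y
    using integrable_lipschitz_on[OF nm lipschitz_on_dist] .
  have "1-lipschitz_on UNIV m"
  proof (intro lipschitz_onI)
    fix y y'
    have "\<bar>(\<integral>x. dist x y - dist x y' \<partial>nu)\<bar> \<le> (\<integral>x. dist y y' \<partial>nu)"
    proof (rule integral_abs_bound_integral)
      show "\<bar>dist x y - dist x y'\<bar> \<le> dist y y'" for x
        using abs_dist_diff_le[of y x y'] by (simp add: dist_commute)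
    qed (use int in auto)
    then show "dist (m y) (m y') \<le> 1 * dist y y'"
      using int by (simp add: m_def dist_real_def prob_space)
  qed simp
  then have cont: "continuous_on UNIV m" by (rule lipschitz_on_continuous_on)
  have far: "norm y - m 0 \<le> m y" for y
  proof -
    have "(\<integral>x. norm y - norm x \<partial>nu) \<le> m y"
      unfolding m_def
    proof (rule integral_mono)
      show "norm y - norm x \<le> dist x y" for x
        using norm_triangle_ineq2[of y x] by (simp add: dist_norm norm_minus_commute)
    qed (use nm int in auto)
    then show ?thesis using nm by (simp add: m_def prob_space)
  qed
  have "0 \<le> m 0" by (simp add: m_def)
  then have "\<exists>y0\<in>cball 0 (2 * m 0). \<forall>y\<in>cball 0 (2 * m 0). m y0 \<le> m y"
    by (intro continuous_attains_inf compact_cball continuous_on_subset[OF cont]) auto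
  then obtain y0 where y0: "\<And>y. y \<in> cball 0 (2 * m 0) \<Longrightarrow> m y0 \<le> m y"
    by blast
  have "m y0 \<le> m y" for y
  proof (cases "y \<in> cball 0 (2 * m 0)")
    case False
    then have "m 0 < m y" using far[of y] by simp
    moreover have "m y0 \<le> m 0" using y0 \<open>0 \<le> m 0\<close> by simp
    ultimately show ?thesis by simp
  qed (rule y0)
  then show thesis using that unfolding m_def by blast
qed

lemma concentration_constant_ge_one:
  assumes nm: "integrable nu norm" and pos: "\<And>y. 0 < (\<integral>x. dist x y \<partial>nu)" and "C \<ge> 0"
    and conc: "\<And>k. k > 0 \<Longrightarrow> \<exists>A\<in>sets (PiM {..<1} (\<lambda>_. nu)).
       {z \<in> space (PiM {..<1} (\<lambda>_. nu)). k \<le> emp_wasserstein nu 1 z} \<subseteq> A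
       \<and> measure (PiM {..<1} (\<lambda>_. nu)) A \<le> C * b k"
    and b: "\<And>k. k > 0 \<Longrightarrow> b k \<le> 1"
  shows "1 \<le> C"
proof -
  let ?P = "PiM {..<1} (\<lambda>_. nu)"
  interpret P: prob_space ?P by (intro prob_space_PiM prob_space_axioms)
  obtain y0 where y0: "\<And>y. (\<integral>x. dist x y0 \<partial>nu) \<le> (\<integral>x. dist x y \<partial>nu)"
    using mean_dist_attains_min[OF nm] by blast
  define D where "D = (\<integral>x. dist x y0 \<partial>nu)"
  obtain A where A: "A \<in> sets ?P" "{z \<in> space ?P. D \<le> emp_wasserstein nu 1 z} \<subseteq> A"
    "measure ?P A \<le> C * b D"
    using conc[of D] pos unfolding D_def by blast
  have "D \<le> emp_wasserstein nu 1 z" for z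
    using mean_gap_le_emp_wasserstein[OF nm _ lipschitz_on_dist[of UNIV "z 0"], of 1 z] y0[of "z 0"]
    by (simp add: D_def emp_mean_def)
  then have "space ?P \<subseteq> A" using A(2) by blast
  then have "1 \<le> measure ?P A"
    using A(1) P.prob_space P.finite_measure_mono by metis
  also have "\<dots> \<le> C * b D" by (rule A(3))
  also have "\<dots> \<le> C"
    using mult_left_mono[OF b[OF pos[of y0, folded D_def]] \<open>C \<ge> 0\<close>] by simp
  finally show ?thesis .
qed

lemma selected_var_ge_gamma_SUP_var:
  fixes g :: "'p \<Rightarrow> 'a \<Rightarrow> real"
  assumes nm: "integrable nu norm" and M: "M > 0" and K: "K > 0" and B: "B > 0"
    and U: "\<And>S. open S \<Longrightarrow> S \<in> null_sets nu \<Longrightarrow> S \<subseteq> U" and z: "\<And>k. k < M \<Longrightarrow> z k \<notin> U"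
    and lip: "\<And>mu. mu \<in> P \<Longrightarrow> K-lipschitz_on UNIV (g mu)"
    and bound: "\<And>mu. mu \<in> P \<Longrightarrow> AE x in nu. \<bar>g mu x\<bar> \<le> B"
    and mean0: "\<And>mu. mu \<in> P \<Longrightarrow> (\<integral>x. g mu x \<partial>nu) = 0"
    and s: "s \<in> P" "\<And>mu. mu \<in> P \<Longrightarrow> emp_var M z (g mu) \<le> emp_var M z (g s)"
    and gamma: "gamma\<^sup>2 \<le> 1" and sig: "0 \<le> (SUP mu\<in>P. var_nu nu (g mu))"
    and W: "emp_wasserstein nu M z \<le> (1 - gamma\<^sup>2) * (SUP mu\<in>P. var_nu nu (g mu)) / (8 * B * K)"
  shows "gamma\<^sup>2 * (SUP mu\<in>P. var_nu nu (g mu)) \<le> var_nu nu (g s)"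
proof -
  let ?sig = "SUP mu\<in>P. var_nu nu (g mu)" and ?W = "emp_wasserstein nu M z"
  have "\<bar>emp_var M z (g mu) - var_nu nu (g mu)\<bar> \<le> 3 * B * K * ?W" if "mu \<in> P" for mu
    unfolding var_nu_def mean0[OF that] power_zero_numeral diff_zero
  proof (rule abs_emp_var_minus_second_moment_le[OF nm M K B lip[OF that] _ bound[OF that] mean0[OF that]])
    show "\<bar>g mu (z k)\<bar> \<le> B" if "k < M" for k
      using abs_le_outside_open_null_sets[OF U lipschitz_on_continuous_on[OF lip[OF \<open>mu \<in> P\<close>]]
          bound[OF \<open>mu \<in> P\<close>] z[OF that]] .
  qed
  then have "?sig \<le> var_nu nu (g s) + 6 * B * K * ?W"
    using SUP_le_approx_maximizer[of P s "\<lambda>mu. emp_var M z (g mu)"] s by fastforce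
  moreover have "6 * B * K * ?W \<le> 3 / 4 * ((1 - gamma\<^sup>2) * ?sig)"
    using W B K by (simp add: field_simps)
  moreover have "0 \<le> (1 - gamma\<^sup>2) * ?sig"
    using gamma sig by simp
  moreover have "gamma\<^sup>2 * ?sig = ?sig - (1 - gamma\<^sup>2) * ?sig"
    by (simp add: algebra_simps)
  ultimately show ?thesis by linarith
qed

end

(* Assumption (B) without (B4) and compactness, for the family g_mu = centered nu f mu, which is
   assumed not to vanish identically; sigma0_sq, K_inf, K_lip are the paper's sigma_0(M)^2,
   K_infinity and K_L. *)
locale centered_lipschitz_family = euclidean_distribution nu for nu :: "'a::euclidean_space measure" +
  fixes P :: "'p set" and f :: "'p \<Rightarrow> 'a \<Rightarrow> real"
  assumes square_integrable:
      "\<And>mu. mu \<in> P \<Longrightarrow> f mu \<in> borel_measurable nu \<and> integrable nu (\<lambda>x. (f mu x)\<^sup>2)"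
    and bdd_above_sqrt_var: "bdd_above ((\<lambda>mu. sqrt (var_nu nu (centered nu f mu))) ` P)"
    and lipschitz: "\<And>mu. mu \<in> P \<Longrightarrow> \<exists>L. L-lipschitz_on UNIV (centered nu f mu)"
    and bdd_above_lip_const: "bdd_above ((\<lambda>mu. lip_const (centered nu f mu)) ` P)"
    and SUP_linf_norm_finite: "(SUP mu\<in>P. linf_norm nu (centered nu f mu)) < \<infinity>"
    and nontrivial: "\<exists>mu\<in>P. \<not> (AE x in nu. centered nu f mu x = 0)"
begin

abbreviation "sigma0_sq \<equiv> SUP mu\<in>P. var_nu nu (centered nu f mu)"
abbreviation "K_inf \<equiv> real_of_ereal (SUP mu\<in>P. linf_norm nu (centered nu f mu))"
abbreviation "K_lip \<equiv> SUP mu\<in>P. lip_const (centered nu f mu)"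

lemma integral_centered_eq_0: "mu \<in> P \<Longrightarrow> (\<integral>x. centered nu f mu x \<partial>nu) = 0"
  using square_integrable by (blast intro: integral_centered square_integrable_imp_integrable)

lemma lipschitz_on_centered: "mu \<in> P \<Longrightarrow> K_lip-lipschitz_on UNIV (centered nu f mu)"
  using bdd_above_lip_const lipschitz by (rule lipschitz_on_SUP_lip_const)

lemma AE_abs_centered_le: "mu \<in> P \<Longrightarrow> AE x in nu. \<bar>centered nu f mu x\<bar> \<le> K_inf"
  using SUP_linf_norm_finite by (rule AE_abs_le_SUP_linf_norm)

lemma sigma0_sq_pos: "0 < sigma0_sq"
proof -
  obtain mu where mu: "mu \<in> P" "\<not> (AE x in nu. centered nu f mu x = 0)"
    using nontrivial by blast
  have "0 < var_nu nu (centered nu f mu)"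
    using square_integrable[OF mu(1)] integral_centered_eq_0[OF mu(1)] mu(2)
    by (intro var_nu_pos integrable_centered_square)
      (auto intro: square_integrable_imp_integrable)
  also have "\<dots> \<le> sigma0_sq"
    using mu(1) bdd_above_of_bdd_above_sqrt[OF bdd_above_sqrt_var] by (rule cSUP_upper)
  finally show ?thesis .
qed

lemma K_inf_pos: "0 < K_inf"
proof -
  obtain mu where mu: "mu \<in> P" "\<not> (AE x in nu. centered nu f mu x = 0)"
    using nontrivial by blast
  have "0 < (SUP mu\<in>P. linf_norm nu (centered nu f mu))"
    using linf_norm_pos[OF mu(2)] SUP_upper[OF mu(1)] by (rule less_le_trans)
  then show ?thesis
    using SUP_linf_norm_finite by (cases "SUP mu\<in>P. linf_norm nu (centered nu f mu)") auto
qed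

lemma K_lip_pos: "0 < K_lip"
  using nontrivial lipschitz_constant_pos[OF lipschitz_on_centered integral_centered_eq_0] by blast

lemma integral_dist_pos_of_family:
  assumes "integrable nu norm"
  shows "0 < (\<integral>x. dist x y \<partial>nu)"
  using nontrivial integral_dist_pos[OF assms borel_measurable_lipschitz_on[OF lipschitz_on_centered]
      integral_centered_eq_0] by blast

lemma exists_event_selected_var_ge:
  fixes sel :: "(nat \<Rightarrow> 'a) \<Rightarrow> 'p" and M :: nat
  defines "PM \<equiv> PiM {..<M} (\<lambda>_. nu)"
  assumes nm: "integrable nu norm" and M: "M > 0"
    and sel: "\<And>z. z \<in> space PM \<Longrightarrow> sel z \<in> P \<and>
       (\<forall>mu\<in>P. emp_var M z (centered nu f mu) \<le> emp_var M z (centered nu f (sel z)))"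
    and gamma: "gamma\<^sup>2 \<le> 1"
    and AF: "AF \<in> sets PM"
      "{z \<in> space PM. (1 - gamma\<^sup>2) * sigma0_sq / (8 * K_inf * K_lip) \<le> emp_wasserstein nu M z} \<subseteq> AF"
  shows "\<exists>A\<in>sets PM. 1 - measure PM AF \<le> measure PM A
           \<and> A \<subseteq> {z \<in> space PM. gamma\<^sup>2 * sigma0_sq \<le> var_nu nu (centered nu f (sel z))}"
proof -
  obtain U where U: "U \<in> null_sets nu" "\<And>S. open S \<Longrightarrow> S \<in> null_sets nu \<Longrightarrow> S \<subseteq> U"
    using null_set_covering_open_null_sets by blast
  define A where "A = PiE {..<M} (\<lambda>_. space nu - U) - AF"
  have "A \<subseteq> {z \<in> space PM. gamma\<^sup>2 * sigma0_sq \<le> var_nu nu (centered nu f (sel z))}"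
  proof
    fix z assume "z \<in> A"
    then have zG: "z \<in> PiE {..<M} (\<lambda>_. space nu - U)" and "z \<notin> AF"
      unfolding A_def by simp_all
    have z: "z \<in> space PM" "\<And>k. k < M \<Longrightarrow> z k \<notin> U"
      using zG PiE_mono[of "{..<M}" "\<lambda>_. space nu - U" "\<lambda>_. space nu"] PiE_mem[OF zG]
      unfolding PM_def space_PiM by auto
    have "\<not> (1 - gamma\<^sup>2) * sigma0_sq / (8 * K_inf * K_lip) \<le> emp_wasserstein nu M z"
    proof
      assume "(1 - gamma\<^sup>2) * sigma0_sq / (8 * K_inf * K_lip) \<le> emp_wasserstein nu M z"
      with z(1) have "z \<in> AF" using AF(2) by blast
      with \<open>z \<notin> AF\<close> show False ..
    qed
    moreover have "sel z \<in> P" "\<And>mu. mu \<in> P \<Longrightarrow> emp_var M z (centered nu f mu) \<le> emp_var M z (centered nu f (sel z))"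
      using sel[OF z(1)] by auto
    ultimately have "gamma\<^sup>2 * sigma0_sq \<le> var_nu nu (centered nu f (sel z))"
      using gamma less_imp_le[OF sigma0_sq_pos]
      by (intro selected_var_ge_gamma_SUP_var[OF nm M K_lip_pos K_inf_pos U(2) z(2)
            lipschitz_on_centered AE_abs_centered_le integral_centered_eq_0]) auto
    with z(1) show "z \<in> {z \<in> space PM. gamma\<^sup>2 * sigma0_sq \<le> var_nu nu (centered nu f (sel z))}" by blast
  qed
  moreover have "1 - measure PM AF \<le> measure PM A"
    unfolding A_def PM_def using measure_PiM_PiE_compl_null_Diff_ge[OF U(1) _ AF(1)[unfolded PM_def]] by simp
  moreover have "A \<in> sets PM"
    using U(1) AF(1) unfolding A_def PM_def by (intro sets.Diff sets_PiM_I_finite) auto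
  ultimately show ?thesis by blast
qed

end

theorem lemma3:
  fixes nu :: "'a::euclidean_space measure"
    and P :: "'p::euclidean_space set"
    and f :: "'p \<Rightarrow> 'a \<Rightarrow> real"
    and alpha beta c C gamma delta1 :: real
    and M1 :: nat
    and sel :: "(nat \<Rightarrow> 'a) \<Rightarrow> 'p"
  assumes nu_prob: "prob_space nu"
    and nu_borel: "sets nu = sets borel"
    \<comment> \<open>Assumption (A)\<close>
    and alpha: "alpha > 1" and beta: "beta > 0"
    and expmom: "integrable nu (\<lambda>x. exp (beta * norm x powr alpha))"
    \<comment> \<open>Fournier--Guillin concentration constants c, C\<close>
    and cC: "c > 0" "C > 0"
    and FG: "\<And>(M::nat) (k::real). k > 0 \<Longrightarrow>
       \<exists>A\<in>sets (PiM {..<M} (\<lambda>_. nu)).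
          {z \<in> space (PiM {..<M} (\<lambda>_. nu)).
             k \<le> (SUP h\<in>{h::'a \<Rightarrow> real. 1-lipschitz_on UNIV h}.
                    \<bar>(\<integral>x. h x \<partial>nu) - emp_mean M z h\<bar>)} \<subseteq> A
          \<and> measure (PiM {..<M} (\<lambda>_. nu)) A \<le> C * exp (- c * real M * phi_FG DIM('a) alpha k)"
    \<comment> \<open>standing assumptions on f\<close>
    and f_cont: "\<And>mu. mu \<in> P \<Longrightarrow> continuous_on UNIV (f mu)"
    and f_L2: "\<And>mu. mu \<in> P \<Longrightarrow> f mu \<in> borel_measurable nu \<and> integrable nu (\<lambda>x. (f mu x)\<^sup>2)"
    \<comment> \<open>(B1) compactness of M in L^2 (sequential compactness) and K_2 finite\<close>
    and B1_compact: "\<And>s::nat \<Rightarrow> 'p. (\<forall>n. s n \<in> P) \<Longrightarrow>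
       \<exists>r mu. strict_mono r \<and> mu \<in> P \<and>
          (\<lambda>n. l2dist nu (centered nu f (s (r n))) (centered nu f mu)) \<longlonglongrightarrow> 0"
    and B1_K2: "bdd_above ((\<lambda>mu. sqrt (var_nu nu (centered nu f mu))) ` P)"
    \<comment> \<open>(B2) Lipschitz with bounded constants\<close>
    and B2_lip: "\<And>mu. mu \<in> P \<Longrightarrow> \<exists>L. L-lipschitz_on UNIV (centered nu f mu)"
    and B2_K: "bdd_above ((\<lambda>mu. lip_const (centered nu f mu)) ` P)"
    \<comment> \<open>(B3) essentially bounded with bounded norms\<close>
    and B3: "(SUP mu\<in>P. linf_norm nu (centered nu f mu)) < \<infinity>"
    \<comment> \<open>(B4) positive Kolmogorov widths\<close>
    and B4: "\<And>n. kolmogorov_width nu (centered nu f) P n > 0"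
    \<comment> \<open>parameters\<close>
    and gamma: "0 < gamma" "gamma < 1"
    and delta1: "0 < delta1" "delta1 < 1"
    and M1: "real M1 \<ge> - ln (delta1 / C) * (1 / (c * phi_FG DIM('a) alpha
          ((1 - gamma\<^sup>2) * (SUP mu\<in>P. var_nu nu (centered nu f mu))
           / (8 * real_of_ereal (SUP mu\<in>P. linf_norm nu (centered nu f mu))
                * (SUP mu\<in>P. lip_const (centered nu f mu))))))"
    \<comment> \<open>first step of the MC-greedy algorithm: an empirical-variance maximiser with g nonzero\<close>
    and sel: "\<And>z. z \<in> space (PiM {..<M1} (\<lambda>_. nu)) \<Longrightarrow>
       sel z \<in> P \<and>
       (\<forall>mu\<in>P. emp_var M1 z (centered nu f mu) \<le> emp_var M1 z (centered nu f (sel z))) \<and>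
       \<not> (AE x in nu. centered nu f (sel z) x = 0)"
  shows "\<exists>A\<in>sets (PiM {..<M1} (\<lambda>_. nu)).
           measure (PiM {..<M1} (\<lambda>_. nu)) A \<ge> 1 - delta1 \<and>
           A \<subseteq> {z \<in> space (PiM {..<M1} (\<lambda>_. nu)).
                  var_nu nu (centered nu f (sel z))
                    \<ge> gamma\<^sup>2 * (SUP mu\<in>P. var_nu nu (centered nu f mu))}"
proof -
  interpret euclidean_distribution nu
    using nu_prob nu_borel by (simp add: euclidean_distribution_def euclidean_distribution_axioms_def)
  let ?PM = "PiM {..<M1} (\<lambda>_. nu)"
  interpret PM: prob_space ?PM by (intro prob_space_PiM prob_space_axioms)
  have nm: "integrable nu norm" using integrable_norm_of_exp_moment[OF alpha beta expmom] .
  obtain z0 where "z0 \<in> space ?PM" using PM.not_empty by blast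
  interpret centered_lipschitz_family nu P f
    using f_L2 B1_K2 B2_lip B2_K B3 sel[OF \<open>z0 \<in> space ?PM\<close>] by unfold_locales auto
  note conc = FG[folded emp_wasserstein_def]
  define kap where "kap = (1 - gamma\<^sup>2) * sigma0_sq / (8 * K_inf * K_lip)"
  have "1 \<le> C"
  proof (rule concentration_constant_ge_one[OF nm integral_dist_pos_of_family[OF nm] _ conc[of _ 1]])
    show "exp (- c * real 1 * phi_FG DIM('a) alpha k) \<le> 1" if "0 < k" for k
      using cC(1) phi_FG_pos[OF that, of "DIM('a)" alpha] by simp
  qed (use cC in auto)
  have "0 < kap" unfolding kap_def
    using gamma sigma0_sq_pos K_inf_pos K_lip_pos by (simp add: power_less_one_iff)
  note size = sample_size_condition[OF cC(1) phi_FG_pos[OF \<open>0 < kap\<close>] \<open>1 \<le> C\<close> delta1 M1[folded kap_def]]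
  obtain AF where AF: "AF \<in> sets ?PM" "{z \<in> space ?PM. kap \<le> emp_wasserstein nu M1 z} \<subseteq> AF"
    "measure ?PM AF \<le> C * exp (- c * real M1 * phi_FG DIM('a) alpha kap)"
    using conc[OF \<open>0 < kap\<close>, of M1] by (elim bexE conjE)
  have "gamma\<^sup>2 \<le> 1" using gamma by (simp add: power_le_one)
  with sel have "\<exists>A\<in>sets ?PM. 1 - measure ?PM AF \<le> measure ?PM A
      \<and> A \<subseteq> {z \<in> space ?PM. gamma\<^sup>2 * sigma0_sq \<le> var_nu nu (centered nu f (sel z))}"
    by (intro exists_event_selected_var_ge[OF nm size(1) _ _ AF(1) AF(2)[unfolded kap_def]]) auto
  then obtain A where "A \<in> sets ?PM" "1 - measure ?PM AF \<le> measure ?PM A"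
      "A \<subseteq> {z \<in> space ?PM. gamma\<^sup>2 * sigma0_sq \<le> var_nu nu (centered nu f (sel z))}"
    by (elim bexE conjE)
  with AF(3) size(2) show ?thesis by (intro bexI[of _ A]) auto
qed

end
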